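(* Assume (A1)–(A5) (see context) with $q\ge 2$, and choose the quantile level $p=1-\eta$. Suppose $$\kappa := (1-\eta)p\mu -\eta L - (1-p)^{-1/q}A_q\big(1 -p(1-\eta)\big) > 0 \quad\text{with } p=1-\eta,$$ and that the step size $\beta>0$ satisfies both $$\beta < \frac{1}{4}\,\frac{\kappa}{\mu^2 + 6L^2 +16\, \eta^{-2/q}A_q^2}\qquad\text{and}\qquad \beta\le \frac{\eta^{2-2/q}}{\kappa}.$$ Let $\pi_{\beta,1-\eta}$ be the unique invariant probability measure of the QC-SGD Markov chain with parameters $\beta$ and $p=1-\eta$. Then for $\theta\sim\pi_{\beta,1-\eta}$, $$\mathbb{E}\|\theta-\theta^\star\|^2\le\Big(\frac{6\,\eta^{1-1/q}B_q}{\kappa}\Big)^2.$$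
   Context: Setting: minimize $\mathcal{L}(\theta)=\mathbb{E}_\zeta[\ell(\theta,\zeta)]$ over $\theta\in\mathbb{R}^d$ (Euclidean norm), using stochastic gradient samples $G(\theta_t,\zeta_t)$. (A1) $\mathcal{L}(\theta') \le \mathcal{L}(\theta)+\langle\nabla\mathcal{L}(\theta),\theta'-\theta\rangle+\frac{L}{2}\|\theta-\theta'\|^2$ for all $\theta,\theta'$, $L<\infty$. (A2) $\mathcal{L}(\theta') \ge \mathcal{L}(\theta)+\langle\nabla\mathcal{L}(\theta),\theta'-\theta\rangle+\frac{\mu}{2}\|\theta-\theta'\|^2$ for all $\theta,\theta'$, $\mu>0$; $\theta^\star$ is the unique minimizer. (A3) $G(\theta_t,\zeta_t)=U_t\check G(\theta_t)+(1-U_t)\widetilde G(\theta_t,\zeta_t)$ with $U_t$ i.i.d. Bernoulli($\eta$), $\eta<1/2$, $\check G(\theta_t)$ from an arbitrary distribution possibly depending on $\theta_t$, and $\widetilde G(\theta_t,\zeta_t)\sim\mathcal{D}_{\mathcal I}(\theta_t)$ the true gradient distribution, independent of the past given $\theta_t$. (A4) $\widetilde G(\theta,\zeta)=\nabla\mathcal{L}(\theta)+\varepsilon_\theta$ with $\mathbb{E}[\varepsilon_\theta\mid\theta]=0$ and $\varepsilon_\theta\sim\delta\nu_{\theta,1}+(1-\delta)\nu_{\theta,2}$, $\delta>0$, where $\nu_{\theta,1}$ has Lebesgue density $h_\theta$ with $\inf_{\|\omega\|\le R}h_\theta(\omega)>\varkappa(R)>0$ for all $R>0$, $\varkappa$ independent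 of $\theta$. (A5) For all $\theta$: $\mathbb{E}[\|\varepsilon_\theta\|^q\mid\theta]^{1/q}\le A_q\|\theta-\theta^\star\|+B_q$, with $A_q,B_q>0$. QC-SGD with step size $\beta$ and quantile level $p$: $\theta_{t+1}=\theta_t-\alpha_{\theta_t}\beta G(\theta_t,\zeta_t)$, $\alpha_{\theta}=\min(1,\tau_\theta/\|G(\theta,\zeta)\|)$, $\tau_\theta=Q_p(\|\widetilde G(\theta,\zeta)\|)$ the $p$-quantile of the norm of an uncorrupted gradient sample at $\theta$. Under the stated conditions the chain $(\theta_t)$ admits a unique invariant probability measure $\pi_{\beta,p}$. *)

theory Defs
  imports "HOL-Probability.Probability"
begin

definition quantile_norm :: "'a::euclidean_space measure \<Rightarrow> real \<Rightarrow> real" where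
  "quantile_norm M p = Inf {t::real. p \<le> measure M {x \<in> space M. norm x \<le> t}}"

definition qcsgd_step :: "real \<Rightarrow> real \<Rightarrow> 'a::euclidean_space \<Rightarrow> 'a \<Rightarrow> 'a" where
  "qcsgd_step \<beta> \<tau> \<theta> g = \<theta> - (min 1 (\<tau> / norm g) * \<beta>) *\<^sub>R g"

definition qcsgd_kernel ::
  "real \<Rightarrow> real \<Rightarrow> real \<Rightarrow> ('a::euclidean_space \<Rightarrow> 'a measure) \<Rightarrow> ('a \<Rightarrow> 'a measure)
     \<Rightarrow> 'a \<Rightarrow> 'a set \<Rightarrow> ennreal" where
  "qcsgd_kernel \<eta> \<beta> p C D \<theta> A =
     ennreal \<eta> * emeasure (C \<theta>) {g \<in> space (C \<theta>). qcsgd_step \<beta> (quantile_norm (D \<theta>) p) \<theta> g \<in> A}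
   + ennreal (1 - \<eta>) * emeasure (D \<theta>) {g \<in> space (D \<theta>). qcsgd_step \<beta> (quantile_norm (D \<theta>) p) \<theta> g \<in> A}"

definition qcsgd_invariant ::
  "real \<Rightarrow> real \<Rightarrow> real \<Rightarrow> ('a::euclidean_space \<Rightarrow> 'a measure) \<Rightarrow> ('a \<Rightarrow> 'a measure)
     \<Rightarrow> 'a measure \<Rightarrow> bool" where
  "qcsgd_invariant \<eta> \<beta> p C D \<pi> \<longleftrightarrow>
     prob_space \<pi> \<and> sets \<pi> = sets borel \<and>
     (\<forall>A \<in> sets borel. emeasure \<pi> A = (\<integral>\<^sup>+ \<theta>. qcsgd_kernel \<eta> \<beta> p C D \<theta> A \<partial>\<pi>))"

end

theory Submission
  imports Defs
begin

(* V(theta) = |theta - theta*|^2 is a Lyapunov function for the QC-SGD chain.  A corrupted sample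
   moves theta by at most beta tau_theta, because of clipping.  For an uncorrupted sample the
   unclipped part of the step is an unbiased strongly monotone gradient step, while the clipped
   part only costs |d| |e| on the clipping event, which has probability at most eta; Hoelder's
   inequality for the q-th moment turns this into eta^(1-1/q) (A |d| + B), and Markov's inequality
   bounds tau_theta by L |d| + eta^(-1/q) (A |d| + B).  Altogether the transition operator P
   satisfies P V <= (1 - beta kappa) V + beta b, and integrating against an invariant measure pi
   (after truncating V to keep all integrals finite) gives E_pi V <= b / kappa. *)

(* The QC-SGD kernel is not assumed measurable in theta, so integrals of kernel quantities against
   pi are lower integrals of possibly non-measurable functions, for which the library's
   additivity and linearity lemmas do not apply. *)
lemma nn_integral_superadditive:
  "integral\<^sup>N M f + integral\<^sup>N M g \<le> (\<integral>\<^sup>+ x. f x + g x \<partial>M)"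
proof -
  have nonempty: "{u. simple_function M u \<and> u \<le> h} \<noteq> {}" for h :: "_ \<Rightarrow> ennreal"
    using simple_function_const[of M 0] by (auto simp: le_fun_def)
  have bound: "integral\<^sup>S M u + integral\<^sup>S M v \<le> (\<integral>\<^sup>+ x. f x + g x \<partial>M)"
    if "simple_function M u" "u \<le> f" "simple_function M v" "v \<le> g" for u v
  proof -
    have "integral\<^sup>S M u + integral\<^sup>S M v = (\<integral>\<^sup>S x. u x + v x \<partial>M)"
      using that by simp
    also have "\<dots> \<le> (\<integral>\<^sup>+ x. f x + g x \<partial>M)"
      unfolding nn_integral_def using that
      by (intro SUP_upper) (auto simp: le_fun_def intro: add_mono)
    finally show ?thesis .
  qed
  have "integral\<^sup>N M f + integral\<^sup>N M g
      = (SUP u\<in>{u. simple_function M u \<and> u \<le> f}. SUP v\<in>{v. simple_function M v \<and> v \<le> g}.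
           integral\<^sup>S M u + integral\<^sup>S M v)"
    unfolding nn_integral_def
    by (simp add: ennreal_SUP_add_left[symmetric, OF nonempty] ennreal_SUP_add_right[symmetric, OF nonempty])
  also have "\<dots> \<le> (\<integral>\<^sup>+ x. f x + g x \<partial>M)"
    by (intro SUP_least) (auto intro: bound)
  finally show ?thesis .
qed

lemma nn_integral_cmult_le:
  "c * integral\<^sup>N M f \<le> (\<integral>\<^sup>+ x. c * f x \<partial>M)"
proof -
  have "c * integral\<^sup>S M u \<le> (\<integral>\<^sup>+ x. c * f x \<partial>M)" if "simple_function M u" "u \<le> f" for u
  proof -
    have "c * integral\<^sup>S M u = (\<integral>\<^sup>S x. c * u x \<partial>M)"
      using that by simp
    also have "\<dots> \<le> (\<integral>\<^sup>+ x. c * f x \<partial>M)"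
      unfolding nn_integral_def using that
      by (intro SUP_upper) (auto simp: le_fun_def intro: mult_left_mono)
    finally show ?thesis .
  qed
  then show ?thesis
    unfolding nn_integral_def by (simp add: SUP_mult_left_ennreal) (intro SUP_least, auto)
qed

lemma nn_integral_sum_cmult_le:
  assumes "finite I"
  shows "(\<Sum>i\<in>I. c i * integral\<^sup>N M (f i)) \<le> (\<integral>\<^sup>+ x. (\<Sum>i\<in>I. c i * f i x) \<partial>M)"
  using assms
proof induct
  case (insert i I)
  have "(\<Sum>j\<in>insert i I. c j * integral\<^sup>N M (f j))
      \<le> (\<integral>\<^sup>+ x. c i * f i x \<partial>M) + (\<integral>\<^sup>+ x. (\<Sum>j\<in>I. c j * f j x) \<partial>M)"
    using insert by (simp add: add_mono nn_integral_cmult_le)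
  also have "\<dots> \<le> (\<integral>\<^sup>+ x. (\<Sum>j\<in>insert i I. c j * f j x) \<partial>M)"
    using insert nn_integral_superadditive by simp
  finally show ?case .
qed simp

lemma invariant_mixture_nn_integral_le:
  fixes \<pi> X :: "'a measure" and R S :: "'a \<Rightarrow> 'a measure"
  assumes sets_\<pi>: "sets \<pi> = sets X"
    and sets_R: "\<And>\<theta>. sets (R \<theta>) = sets X" and sets_S: "\<And>\<theta>. sets (S \<theta>) = sets X"
    and invariant: "\<And>A. A \<in> sets X \<Longrightarrow>
       emeasure \<pi> A = (\<integral>\<^sup>+\<theta>. a * emeasure (R \<theta>) A + b * emeasure (S \<theta>) A \<partial>\<pi>)"
  shows "integral\<^sup>N \<pi> f \<le> (\<integral>\<^sup>+\<theta>. a * integral\<^sup>N (R \<theta>) f + b * integral\<^sup>N (S \<theta>) f \<partial>\<pi>)"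
  unfolding nn_integral_def[of \<pi> f]
proof (intro SUP_least, clarify)
  fix u assume u: "simple_function \<pi> u" "u \<le> f"
  have space_\<pi>: "space \<pi> = space X"
    using sets_eq_imp_space_eq[OF sets_\<pi>] .
  have space_R: "space (R \<theta>) = space X" and space_S: "space (S \<theta>) = space X" for \<theta>
    using sets_eq_imp_space_eq[OF sets_R] sets_eq_imp_space_eq[OF sets_S] by blast+
  have "simple_function (R \<theta>) u" "simple_function (S \<theta>) u" for \<theta>
    using u(1) sets_R sets_S sets_\<pi> space_\<pi> space_R space_S
    by (metis simple_function_cong_algebra)+
  then have simple_le: "integral\<^sup>S (R \<theta>) u \<le> integral\<^sup>N (R \<theta>) f" "integral\<^sup>S (S \<theta>) u \<le> integral\<^sup>N (S \<theta>) f"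
    for \<theta>
    using u(2) by (auto simp: nn_integral_eq_simple_integral[symmetric] le_fun_def intro!: nn_integral_mono)
  have level_sets: "u -` {x} \<inter> space X \<in> sets X" for x
    using simple_functionD(2)[OF u(1)] sets_\<pi> space_\<pi> by simp
  have finite: "finite (u ` space X)"
    using simple_functionD(1)[OF u(1)] space_\<pi> by simp
  have "integral\<^sup>S \<pi> u
      = (\<Sum>x\<in>u ` space X. x * (\<integral>\<^sup>+\<theta>. a * emeasure (R \<theta>) (u -` {x} \<inter> space X)
                                     + b * emeasure (S \<theta>) (u -` {x} \<inter> space X) \<partial>\<pi>))"
    unfolding simple_integral_def space_\<pi> using invariant[OF level_sets] by simp
  also have "\<dots> \<le> (\<integral>\<^sup>+\<theta>. (\<Sum>x\<in>u ` space X. x * (a * emeasure (R \<theta>) (u -` {x} \<inter> space X)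
                                     + b * emeasure (S \<theta>) (u -` {x} \<inter> space X))) \<partial>\<pi>)"
    using finite by (rule nn_integral_sum_cmult_le)
  also have "\<dots> = (\<integral>\<^sup>+\<theta>. a * integral\<^sup>S (R \<theta>) u + b * integral\<^sup>S (S \<theta>) u \<partial>\<pi>)"
    unfolding simple_integral_def space_R space_S
    by (simp add: sum.distrib sum_distrib_left distrib_left mult.assoc mult.left_commute)
  also have "\<dots> \<le> (\<integral>\<^sup>+\<theta>. a * integral\<^sup>N (R \<theta>) f + b * integral\<^sup>N (S \<theta>) f \<partial>\<pi>)"
    using simple_le by (intro nn_integral_mono add_mono mult_left_mono) auto
  finally show "integral\<^sup>S \<pi> u \<le> \<dots>" .
qed

locale lyapunov_drift =
  fixes \<pi> X :: "'a measure" and K :: "('a \<Rightarrow> ennreal) \<Rightarrow> 'a \<Rightarrow> ennreal"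
    and V :: "'a \<Rightarrow> real" and c b :: real
  assumes prob_space_\<pi>: "prob_space \<pi>" and sets_\<pi>: "sets \<pi> = sets X"
    and V_measurable: "V \<in> borel_measurable X" and V_nonneg: "\<And>x. 0 \<le> V x"
    and invariant: "\<And>f. f \<in> borel_measurable X \<Longrightarrow> integral\<^sup>N \<pi> f \<le> (\<integral>\<^sup>+\<theta>. K f \<theta> \<partial>\<pi>)"
    and mono: "\<And>f g \<theta>. (\<And>x. f x \<le> g x) \<Longrightarrow> K f \<theta> \<le> K g \<theta>"
    and const: "\<And>a \<theta>. K (\<lambda>_. a) \<theta> \<le> a"
    and drift: "\<And>\<theta>. K (\<lambda>x. ennreal (V x)) \<theta> \<le> ennreal ((1 - c) * V \<theta> + b)"
    and c: "0 < c" "c \<le> 1" and b: "0 \<le> b"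
begin

sublocale prob_space \<pi>
  by (fact prob_space_\<pi>)

lemma V_measurable_\<pi> [measurable]: "V \<in> borel_measurable \<pi>"
  using V_measurable measurable_cong_sets[OF sets_\<pi> refl] by blast

definition truncated :: "real \<Rightarrow> 'a \<Rightarrow> ennreal" where
  "truncated N \<theta> = (if V \<theta> \<le> N then ennreal (c * V \<theta>) else 0)"

lemma K_min_le:
  "K (\<lambda>x. ennreal (min (V x) N)) \<theta> \<le> (if V \<theta> \<le> N then ennreal ((1 - c) * V \<theta> + b) else ennreal N)"
proof (cases "V \<theta> \<le> N")
  case True
  have "K (\<lambda>x. ennreal (min (V x) N)) \<theta> \<le> K (\<lambda>x. ennreal (V x)) \<theta>"
    by (intro mono) (simp add: ennreal_leI)
  with drift[of \<theta>] True show ?thesis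
    by simp
next
  case False
  have "K (\<lambda>x. ennreal (min (V x) N)) \<theta> \<le> K (\<lambda>_. ennreal N) \<theta>"
    by (intro mono) (simp add: ennreal_leI)
  with const[of "ennreal N" \<theta>] False show ?thesis
    by simp
qed

(* Truncation keeps all integrals finite, so the invariance inequality can be cancelled. *)
lemma nn_integral_truncated_le: "integral\<^sup>N \<pi> (truncated N) \<le> ennreal b"
proof -
  define f where "f x = ennreal (min (V x) N)" for x
  define g where "g x = (if V x \<le> N then ennreal ((1 - c) * V x + b) else ennreal N)" for x
  have [measurable]: "f \<in> borel_measurable \<pi>" "g \<in> borel_measurable \<pi>" "truncated N \<in> borel_measurable \<pi>"
    unfolding f_def g_def truncated_def by measurable
  have "K f \<theta> \<le> g \<theta>" for \<theta>
    unfolding f_def g_def by (rule K_min_le)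
  moreover have "f \<in> borel_measurable X"
    using V_measurable unfolding f_def by measurable
  ultimately have "integral\<^sup>N \<pi> f \<le> integral\<^sup>N \<pi> g"
    using invariant[of f] nn_integral_mono[of \<pi> "K f" g] by fastforce
  then have "integral\<^sup>N \<pi> (truncated N) + integral\<^sup>N \<pi> f \<le> (\<integral>\<^sup>+\<theta>. truncated N \<theta> + g \<theta> \<partial>\<pi>)"
    by (simp add: nn_integral_add add_left_mono)
  also have "\<dots> \<le> (\<integral>\<^sup>+\<theta>. f \<theta> + ennreal b \<partial>\<pi>)"
  proof (intro nn_integral_mono)
    fix \<theta>
    have "0 \<le> c * V \<theta>" "c * V \<theta> \<le> V \<theta>"
      using c V_nonneg[of \<theta>] by (simp_all add: mult_left_le_one_le)
    then have "ennreal (c * V \<theta>) + ennreal ((1 - c) * V \<theta> + b) = ennreal (V \<theta>) + ennreal b"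
      using b by (simp add: ennreal_plus[symmetric] algebra_simps del: ennreal_plus)
    then show "truncated N \<theta> + g \<theta> \<le> f \<theta> + ennreal b"
      by (simp add: f_def g_def truncated_def)
  qed
  also have "\<dots> = integral\<^sup>N \<pi> f + ennreal b"
    by (simp add: nn_integral_add emeasure_space_1)
  finally have "integral\<^sup>N \<pi> f + integral\<^sup>N \<pi> (truncated N) \<le> integral\<^sup>N \<pi> f + ennreal b"
    by (simp add: add.commute)
  moreover have "integral\<^sup>N \<pi> f \<le> ennreal \<bar>N\<bar>"
    using nn_integral_mono[of \<pi> f "\<lambda>_. ennreal \<bar>N\<bar>"]
    by (simp add: f_def emeasure_space_1 ennreal_leI)
  then have "integral\<^sup>N \<pi> f \<noteq> \<top>"
    by (auto simp: top_unique)
  ultimately show ?thesis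
    by (simp add: ennreal_add_left_cancel_le)
qed

lemma nn_integral_V_le: "(\<integral>\<^sup>+\<theta>. ennreal (V \<theta>) \<partial>\<pi>) \<le> ennreal (b / c)"
proof -
  have truncated_SUP: "ennreal (c * V \<theta>) = (SUP N::nat. truncated (real N) \<theta>)" for \<theta>
  proof (rule antisym)
    obtain N :: nat where "V \<theta> \<le> real N"
      using real_arch_simple by blast
    then show "ennreal (c * V \<theta>) \<le> (SUP N::nat. truncated (real N) \<theta>)"
      by (intro SUP_upper2[of N]) (simp_all add: truncated_def)
    show "(SUP N::nat. truncated (real N) \<theta>) \<le> ennreal (c * V \<theta>)"
      by (rule SUP_least) (simp add: truncated_def)
  qed
  have "incseq (\<lambda>N::nat. truncated (real N))"
    by (auto simp: incseq_def le_fun_def truncated_def)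
  have "ennreal c * (\<integral>\<^sup>+\<theta>. ennreal (V \<theta>) \<partial>\<pi>) = (\<integral>\<^sup>+\<theta>. ennreal (c * V \<theta>) \<partial>\<pi>)"
  proof -
    have "(\<lambda>\<theta>. ennreal (V \<theta>)) \<in> borel_measurable \<pi>"
      by measurable
    then show ?thesis
      using c V_nonneg by (simp add: nn_integral_cmult[symmetric] ennreal_mult)
  qed
  also have "\<dots> = (\<integral>\<^sup>+\<theta>. (SUP N::nat. truncated (real N) \<theta>) \<partial>\<pi>)"
    by (simp add: truncated_SUP)
  also have "\<dots> = (SUP N::nat. integral\<^sup>N \<pi> (truncated (real N)))"
    using \<open>incseq (\<lambda>N::nat. truncated (real N))\<close>
    by (rule nn_integral_monotone_convergence_SUP) (unfold truncated_def, measurable)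
  also have "\<dots> \<le> ennreal b"
    by (intro SUP_least nn_integral_truncated_le)
  finally have bound: "ennreal c * (\<integral>\<^sup>+\<theta>. ennreal (V \<theta>) \<partial>\<pi>) \<le> ennreal b" .
  have "(\<integral>\<^sup>+\<theta>. ennreal (V \<theta>) \<partial>\<pi>) = ennreal (1 / c) * (ennreal c * (\<integral>\<^sup>+\<theta>. ennreal (V \<theta>) \<partial>\<pi>))"
    using c by (simp add: ennreal_mult[symmetric] mult.assoc[symmetric])
  also have "\<dots> \<le> ennreal (1 / c) * ennreal b"
    using bound by (rule mult_left_mono) simp
  finally show ?thesis
    using c b by (simp add: ennreal_mult[symmetric])
qed

end

locale smooth_strongly_convex =
  fixes f :: "'a::euclidean_space \<Rightarrow> real" and grad :: "'a \<Rightarrow> 'a" and L \<mu> :: real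
  assumes smooth: "\<And>x y. f y \<le> f x + grad x \<bullet> (y - x) + L / 2 * (norm (x - y))\<^sup>2"
    and strongly_convex: "\<And>x y. f y \<ge> f x + grad x \<bullet> (y - x) + \<mu> / 2 * (norm (x - y))\<^sup>2"
    and mu_pos: "0 < \<mu>"
begin

lemma mu_le_L: "\<mu> \<le> L"
proof -
  obtain v :: 'a where "v \<in> Basis"
    using nonempty_Basis by blast
  then have "norm (0 - v) = 1"
    by simp
  then show ?thesis
    using smooth[where x=0 and y=v] strongly_convex[where x=0 and y=v] by simp
qed

lemma L_pos: "0 < L"
  using mu_le_L mu_pos by simp

lemma descent: "f (x - (1 / L) *\<^sub>R grad x) \<le> f x - (norm (grad x))\<^sup>2 / (2 * L)"
proof -
  have "f (x - (1 / L) *\<^sub>R grad x)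
      \<le> f x + grad x \<bullet> ((x - (1 / L) *\<^sub>R grad x) - x) + L / 2 * (norm (x - (x - (1 / L) *\<^sub>R grad x)))\<^sup>2"
    by (rule smooth)
  also have "grad x \<bullet> ((x - (1 / L) *\<^sub>R grad x) - x) = - (norm (grad x))\<^sup>2 / L"
    by (simp add: power2_norm_eq_inner)
  also have "norm (x - (x - (1 / L) *\<^sub>R grad x)) = norm (grad x) / L"
    using L_pos by simp
  finally show ?thesis
    using L_pos by (simp add: power2_eq_square)
qed

context
  fixes x\<^sub>0 :: 'a
  assumes minimizer: "\<And>x. f x\<^sub>0 \<le> f x"
begin

lemma grad_minimizer_eq_0: "grad x\<^sub>0 = 0"
proof -
  have "(norm (grad x\<^sub>0))\<^sup>2 / (2 * L) \<le> 0"
    using descent[of x\<^sub>0] minimizer[of "x\<^sub>0 - (1 / L) *\<^sub>R grad x\<^sub>0"] by linarith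
  then show ?thesis
    using L_pos by (simp add: divide_le_0_iff)
qed

lemma inner_grad_ge: "\<mu> * (norm (x - x\<^sub>0))\<^sup>2 \<le> grad x \<bullet> (x - x\<^sub>0)"
  using strongly_convex[where x=x\<^sub>0 and y=x] strongly_convex[where x=x and y=x\<^sub>0] grad_minimizer_eq_0
  by (simp add: norm_minus_commute inner_diff_right)

lemma norm_grad_le: "norm (grad x) \<le> L * norm (x - x\<^sub>0)"
proof -
  have "f x\<^sub>0 \<le> f x - (norm (grad x))\<^sup>2 / (2 * L)"
    using descent[of x] minimizer[of "x - (1 / L) *\<^sub>R grad x"] by linarith
  moreover have "f x \<le> f x\<^sub>0 + L / 2 * (norm (x - x\<^sub>0))\<^sup>2"
    using smooth[where x=x\<^sub>0 and y=x] grad_minimizer_eq_0 by (simp add: norm_minus_commute)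
  ultimately have "(norm (grad x))\<^sup>2 / (2 * L) \<le> L / 2 * (norm (x - x\<^sub>0))\<^sup>2"
    by linarith
  then have "(norm (grad x))\<^sup>2 \<le> (L * norm (x - x\<^sub>0))\<^sup>2"
    using L_pos by (simp add: pos_divide_le_eq power2_eq_square mult_ac)
  then show ?thesis
    by (rule power2_le_imp_le) (use L_pos in simp)
qed

end

end

lemma Inf_superlevel_le_right_continuous:
  fixes F :: "real \<Rightarrow> real" and p T :: real
  defines "S \<equiv> {t. p \<le> F t}"
  assumes "mono F" and "continuous (at_right (Inf S)) F" and "T \<in> S" and "bdd_below S"
  shows "p \<le> F (Inf S)"
proof -
  have "eventually (\<lambda>t. p \<le> F t) (at_right (Inf S))"
  proof (rule eventually_at_rightI)
    fix t assume "t \<in> {Inf S<..<Inf S + 1}"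
    then obtain s where "s \<in> S" "s < t"
      using cInf_less_iff[of S t] assms(4,5) by auto
    then show "p \<le> F t"
      using \<open>mono F\<close> by (auto simp: S_def mono_def intro: order_trans)
  qed simp
  moreover have "(F \<longlongrightarrow> F (Inf S)) (at_right (Inf S))"
    using assms(3) by (simp add: continuous_within)
  ultimately show ?thesis
    by (intro tendsto_lowerbound) auto
qed

lemma quantile_norm_bounds:
  fixes M :: "'a::euclidean_space measure"
  assumes "prob_space M" and sets_M: "sets M = sets borel" and p: "0 < p"
    and T: "p \<le> measure M {x \<in> space M. norm x \<le> T}"
  shows "0 \<le> quantile_norm M p" and "quantile_norm M p \<le> T"
    and "p \<le> measure M {x \<in> space M. norm x \<le> quantile_norm M p}"
proof -
  interpret prob_space M by fact
  have [measurable]: "norm \<in> borel_measurable M"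
    using measurable_cong_sets[OF sets_M refl] by (metis borel_measurable_norm)
  interpret F: real_distribution "distr M borel norm"
    by (rule real_distribution_distr) simp
  define F where "F = cdf (distr M borel norm)"
  have F_eq: "F t = measure M {x \<in> space M. norm x \<le> t}" for t
    unfolding F_def cdf_def by (subst measure_distr) (auto intro!: arg_cong[where f="measure M"])
  define S where "S = {t. p \<le> F t}"
  have quantile_eq: "quantile_norm M p = Inf S"
    unfolding S_def F_eq quantile_norm_def ..
  have "T \<in> S"
    using T by (simp add: S_def F_eq)
  have S_nonneg: "0 \<le> t" if "t \<in> S" for t
  proof (rule ccontr)
    assume "\<not> 0 \<le> t"
    then have "{x \<in> space M. norm x \<le> t} = {}"
      by (auto intro: order_trans[OF norm_ge_zero])
    with that p show False
      by (simp add: S_def F_eq)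
  qed
  then have "bdd_below S"
    by (auto intro!: bdd_belowI)
  show "0 \<le> quantile_norm M p"
    unfolding quantile_eq using \<open>T \<in> S\<close> S_nonneg by (intro cInf_greatest) auto
  show "quantile_norm M p \<le> T"
    unfolding quantile_eq using \<open>T \<in> S\<close> \<open>bdd_below S\<close> by (rule cInf_lower)
  have "p \<le> F (Inf S)"
    unfolding S_def
  proof (rule Inf_superlevel_le_right_continuous)
    show "mono F"
      by (simp add: F_def mono_def F.cdf_nondecreasing)
    show "continuous (at_right (Inf {t. p \<le> F t})) F"
      unfolding F_def by (rule F.cdf_is_right_cont)
  qed (use \<open>T \<in> S\<close> \<open>bdd_below S\<close> in \<open>simp_all add: S_def\<close>)
  then show "p \<le> measure M {x \<in> space M. norm x \<le> quantile_norm M p}"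
    by (simp add: quantile_eq F_eq)
qed

lemma (in prob_space) Markov_inequality_powr:
  fixes X :: "'a \<Rightarrow> real"
  assumes [measurable]: "X \<in> borel_measurable M" and X_nonneg: "\<And>x. 0 \<le> X x"
    and moment: "integrable M (\<lambda>x. X x powr q)" "(\<integral>x. X x powr q \<partial>M) \<le> m powr q"
    and "0 < m" "0 < q" "0 < \<eta>"
  shows "1 - \<eta> \<le> prob {x \<in> space M. X x \<le> \<eta> powr (- 1 / q) * m}"
proof -
  define T where "T = \<eta> powr (- 1 / q) * m"
  have "0 < T"
    using assms by (simp add: T_def)
  have "T powr q = (\<eta> powr (- 1 / q)) powr q * m powr q"
    unfolding T_def using assms by (intro powr_mult)
  also have "(\<eta> powr (- 1 / q)) powr q = \<eta> powr (- 1)"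
    using \<open>0 < q\<close> by (simp add: powr_powr)
  finally have T_powr: "T powr q = m powr q / \<eta>"
    using \<open>0 < \<eta>\<close> by (simp add: powr_minus_divide)
  have "{x \<in> space M. T < X x} \<subseteq> {x \<in> space M. T powr q \<le> X x powr q}"
    using \<open>0 < T\<close> \<open>0 < q\<close> by (auto intro: powr_mono2 less_imp_le)
  then have "prob {x \<in> space M. T < X x} \<le> prob {x \<in> space M. T powr q \<le> X x powr q}"
    by (intro finite_measure_mono) measurable
  also have "\<dots> \<le> (\<integral>x. X x powr q \<partial>M) / T powr q"
    using moment(1) \<open>0 < T\<close> by (intro integral_Markov_inequality_measure[where A="space M"]) auto
  also have "\<dots> \<le> \<eta>"
    using moment(2) \<open>0 < T\<close> \<open>0 < \<eta>\<close> T_powr by (simp add: divide_right_mono field_simps)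
  finally have "prob {x \<in> space M. T < X x} \<le> \<eta>" .
  moreover have "prob {x \<in> space M. X x \<le> T} = 1 - prob {x \<in> space M. T < X x}"
    by (subst prob_compl[symmetric]) (auto intro!: arg_cong[where f=prob])
  ultimately show ?thesis
    by (simp add: T_def)
qed

lemma norm_clip_le:
  assumes "0 \<le> \<tau>"
  shows "norm (min 1 (\<tau> / norm g) *\<^sub>R g) \<le> \<tau>"
proof (cases "g = 0")
  case False
  then have "min 1 (\<tau> / norm g) * norm g \<le> \<tau>"
    by (simp add: min_def field_simps)
  then show ?thesis
    using assms by simp
qed (use assms in simp)

lemma dist_qcsgd_step_le:
  assumes "0 \<le> \<tau>" "0 \<le> \<beta>"
  shows "norm (qcsgd_step \<beta> \<tau> \<theta> g - \<theta>') \<le> norm (\<theta> - \<theta>') + \<beta> * \<tau>"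
proof -
  have "qcsgd_step \<beta> \<tau> \<theta> g - \<theta>' = (\<theta> - \<theta>') - \<beta> *\<^sub>R (min 1 (\<tau> / norm g) *\<^sub>R g)"
    by (simp add: qcsgd_step_def algebra_simps)
  also have "norm \<dots> \<le> norm (\<theta> - \<theta>') + \<beta> * norm (min 1 (\<tau> / norm g) *\<^sub>R g)"
    using norm_triangle_ineq4 assms(2) by (metis abs_of_nonneg norm_scaleR)
  also have "\<dots> \<le> norm (\<theta> - \<theta>') + \<beta> * \<tau>"
    by (intro add_left_mono mult_left_mono norm_clip_le assms)
  finally show ?thesis .
qed

(* Clipping only shrinks the nonnegative term <d, G>; the noise term loses at most |d| |e|,
   and only when the sample is clipped. *)
lemma inner_clip_ge:
  fixes d G e :: "'a::real_inner"
  assumes "0 \<le> \<tau>" "0 \<le> d \<bullet> G"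
  shows "indicator {e. norm (G + e) \<le> \<tau>} e * (d \<bullet> G) + d \<bullet> e
           - indicator {e. \<tau> < norm (G + e)} e * (norm d * norm e)
         \<le> min 1 (\<tau> / norm (G + e)) * (d \<bullet> (G + e))"
proof (cases "norm (G + e) \<le> \<tau>")
  case True
  show ?thesis
  proof (cases "G + e = 0")
    case zero: True
    then have "e = - G"
      by (metis add.commute eq_neg_iff_add_eq_0)
    with assms(1) show ?thesis
      by simp
  next
    case False
    with True have "min 1 (\<tau> / norm (G + e)) = 1"
      by (simp add: min_def)
    with True show ?thesis
      by (simp add: inner_add_right)
  qed
next
  case False
  define \<alpha> where "\<alpha> = min 1 (\<tau> / norm (G + e))"
  have "0 \<le> \<alpha>" "\<alpha> \<le> 1"
    using assms(1) by (auto simp: \<alpha>_def)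
  moreover have "d \<bullet> e \<le> norm d * norm e"
    by (metis Cauchy_Schwarz_ineq2 abs_le_iff)
  moreover have "- (d \<bullet> e) \<le> norm d * norm e"
    by (metis Cauchy_Schwarz_ineq2 abs_le_iff)
  ultimately have "(1 - \<alpha>) * (d \<bullet> e) \<le> norm d * norm e" and "0 \<le> \<alpha> * (d \<bullet> G)"
    using assms(2) by (auto intro: order_trans[OF mult_left_mono mult_left_le_one_le])
  with False show ?thesis
    by (simp add: \<alpha>_def[symmetric] algebra_simps)
qed

lemma sq_norm_clip_step_le:
  fixes d G e :: "'a::real_inner"
  assumes "0 \<le> \<tau>" "0 < \<beta>" "0 \<le> d \<bullet> G"
  shows "(norm (d - (min 1 (\<tau> / norm (G + e)) * \<beta>) *\<^sub>R (G + e)))\<^sup>2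
     \<le> (norm d)\<^sup>2 - 2 * \<beta> * (indicator {e. norm (G + e) \<le> \<tau>} e * (d \<bullet> G) + d \<bullet> e
           - indicator {e. \<tau> < norm (G + e)} e * (norm d * norm e))
        + 2 * \<beta>\<^sup>2 * ((norm G)\<^sup>2 + (norm e)\<^sup>2)"
proof -
  define \<alpha> where "\<alpha> = min 1 (\<tau> / norm (G + e))"
  have "0 \<le> \<alpha>" "\<alpha> \<le> 1"
    using assms(1) by (auto simp: \<alpha>_def)
  have expand: "(norm (d - (\<alpha> * \<beta>) *\<^sub>R (G + e)))\<^sup>2
      = (norm d)\<^sup>2 - 2 * \<beta> * (\<alpha> * (d \<bullet> (G + e))) + \<alpha>\<^sup>2 * (\<beta>\<^sup>2 * (norm (G + e))\<^sup>2)"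
    unfolding power2_norm_eq_inner
    by (simp add: inner_commute power2_eq_square algebra_simps)
  have "(norm (G + e))\<^sup>2 \<le> (norm G + norm e)\<^sup>2"
    using norm_triangle_ineq by (intro power_mono) auto
  also have "\<dots> \<le> 2 * ((norm G)\<^sup>2 + (norm e)\<^sup>2)"
    using zero_le_power2[of "norm G - norm e"] unfolding power2_diff power2_sum by (simp add: algebra_simps)
  finally have "\<alpha>\<^sup>2 * (\<beta>\<^sup>2 * (norm (G + e))\<^sup>2) \<le> 1 * (\<beta>\<^sup>2 * (2 * ((norm G)\<^sup>2 + (norm e)\<^sup>2)))"
    using \<open>0 \<le> \<alpha>\<close> \<open>\<alpha> \<le> 1\<close> by (intro mult_mono mult_left_mono) (auto simp: power_le_one)
  then have "\<alpha>\<^sup>2 * (\<beta>\<^sup>2 * (norm (G + e))\<^sup>2) \<le> 2 * \<beta>\<^sup>2 * ((norm G)\<^sup>2 + (norm e)\<^sup>2)"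
    by (simp add: algebra_simps)
  moreover have "2 * \<beta> * (indicator {e. norm (G + e) \<le> \<tau>} e * (d \<bullet> G) + d \<bullet> e
           - indicator {e. \<tau> < norm (G + e)} e * (norm d * norm e)) \<le> 2 * \<beta> * (\<alpha> * (d \<bullet> (G + e)))"
    using inner_clip_ge[OF assms(1,3), of e] assms(2) unfolding \<alpha>_def by (intro mult_left_mono) auto
  ultimately show ?thesis
    unfolding \<alpha>_def[symmetric] expand by linarith
qed

lemma young_powr:
  fixes x t a :: real
  assumes "0 \<le> x" "0 < t" "1 \<le> a"
  shows "x \<le> x powr a / (a * t powr (a - 1)) + (1 - 1 / a) * t"
proof (cases "x = 0")
  case True
  then show ?thesis
    using assms by (simp add: field_simps)
next
  case False
  define z where "z = x / t"
  have "0 < z"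
    using False assms by (simp add: z_def)
  have "(z powr a) powr (1 / a) * 1 powr (1 - 1 / a) \<le> 1 / a * z powr a + (1 - 1 / a) * 1"
    using assms \<open>0 < z\<close> by (intro Youngs_inequality_0) (auto simp: field_simps)
  then have "z \<le> z powr a / a + (1 - 1 / a)"
    using assms \<open>0 < z\<close> by (simp add: powr_powr)
  then have "t * z \<le> t * (z powr a / a + (1 - 1 / a))"
    using assms by (intro mult_left_mono) auto
  then have "t * z \<le> t * (z powr a / a) + (1 - 1 / a) * t"
    by (simp add: algebra_simps)
  moreover have "t * (z powr a / a) = x powr a / (a * t powr (a - 1))"
    using assms by (simp add: z_def powr_divide powr_diff field_simps)
  ultimately show ?thesis
    using assms by (simp add: z_def)
qed

lemma powr_young_optimum:
  fixes \<eta> m a :: real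
  assumes "0 < \<eta>" "0 < m" "1 \<le> a"
  defines "t \<equiv> \<eta> powr (- 1 / a) * m"
  shows "m powr a / (a * t powr (a - 1)) + (1 - 1 / a) * t * \<eta> = \<eta> powr (1 - 1 / a) * m"
proof -
  have "- 1 / a * (a - 1) = 1 / a - 1"
    using assms by (simp add: field_simps)
  then have "(\<eta> powr (- 1 / a)) powr (a - 1) = \<eta> powr (1 / a - 1)"
    by (simp only: powr_powr)
  then have "t powr (a - 1) = \<eta> powr (1 / a - 1) * m powr (a - 1)"
    unfolding t_def using assms by (simp add: powr_mult)
  moreover have "m powr a = m powr (a - 1) * m"
    using assms by (simp add: powr_diff)
  moreover have "\<eta> powr (1 - 1 / a) * \<eta> powr (1 / a - 1) = 1"
    using assms by (simp add: powr_add[symmetric])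
  ultimately have "m powr a / t powr (a - 1) = \<eta> powr (1 - 1 / a) * m"
    using assms by (simp add: field_simps)
  moreover have "\<eta> powr (1 - 1 / a) = \<eta> powr (- 1 / a) * \<eta> powr 1"
    by (subst powr_add[symmetric]) (simp add: algebra_simps)
  ultimately show ?thesis
    using assms by (simp add: t_def field_simps)
qed

lemma (in prob_space) integral_indicator_le_young:
  fixes X :: "'a \<Rightarrow> real"
  assumes [measurable]: "X \<in> borel_measurable M" and X_nonneg: "\<And>x. 0 \<le> X x"
    and moment: "integrable M (\<lambda>x. X x powr a)" and a: "1 \<le> a" and "0 < t" and B: "B \<in> events"
  shows "integrable M (\<lambda>x. indicator B x * X x)"
    and "(\<integral>x. indicator B x * X x \<partial>M)
           \<le> (\<integral>x. X x powr a \<partial>M) / (a * t powr (a - 1)) + (1 - 1 / a) * t * prob B"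
proof -
  define Y where "Y x = X x powr a / (a * t powr (a - 1)) + (1 - 1 / a) * t * indicator B x" for x
  have Y_integrable: "integrable M Y"
    unfolding Y_def using moment B
    by (intro Bochner_Integration.integrable_add integrable_divide integrable_mult_right
        integrable_real_indicator) (auto simp: less_top[symmetric])
  have le_Y: "indicator B x * X x \<le> Y x" for x
    using young_powr[OF X_nonneg \<open>0 < t\<close> a, of x] a \<open>0 < t\<close> X_nonneg[of x]
    by (cases "x \<in> B") (auto simp: Y_def)
  show integrable: "integrable M (\<lambda>x. indicator B x * X x)"
  proof (rule Bochner_Integration.integrable_bound[OF Y_integrable])
    show "(\<lambda>x. indicator B x * X x) \<in> borel_measurable M"
      using B by measurable
    have "norm (indicator B x * X x) \<le> norm (Y x)" for x
      using le_Y[of x] X_nonneg[of x] by simp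
    then show "AE x in M. norm (indicator B x * X x) \<le> norm (Y x)"
      by simp
  qed
  have "(\<integral>x. indicator B x * X x \<partial>M) \<le> (\<integral>x. Y x \<partial>M)"
    using integrable Y_integrable le_Y by (intro integral_mono)
  also have "\<dots> = (\<integral>x. X x powr a \<partial>M) / (a * t powr (a - 1)) + (1 - 1 / a) * t * prob B"
    unfolding Y_def using moment B by (simp add: less_top[symmetric])
  finally show "(\<integral>x. indicator B x * X x \<partial>M)
      \<le> (\<integral>x. X x powr a \<partial>M) / (a * t powr (a - 1)) + (1 - 1 / a) * t * prob B" .
qed

(* Hoelder's inequality E[1_B X] <= P(B)^(1-1/a) (E X^a)^(1/a), via Young's inequality with the
   optimal weight t. *)
lemma (in prob_space) integral_indicator_le_moment:
  fixes X :: "'a \<Rightarrow> real"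
  assumes X: "X \<in> borel_measurable M" "\<And>x. 0 \<le> X x"
    and moment: "integrable M (\<lambda>x. X x powr a)" "(\<integral>x. X x powr a \<partial>M) \<le> m powr a"
    and a: "1 \<le> a" and "0 < m" and B: "B \<in> events" "prob B \<le> \<eta>" and "0 < \<eta>"
  shows "integrable M (\<lambda>x. indicator B x * X x)"
    and "(\<integral>x. indicator B x * X x \<partial>M) \<le> \<eta> powr (1 - 1 / a) * m"
proof -
  define t where "t = \<eta> powr (- 1 / a) * m"
  have "0 < t"
    using assms by (simp add: t_def)
  show "integrable M (\<lambda>x. indicator B x * X x)"
    using integral_indicator_le_young[OF X moment(1) a \<open>0 < t\<close> B(1)] by blast
  have "(\<integral>x. indicator B x * X x \<partial>M)
      \<le> (\<integral>x. X x powr a \<partial>M) / (a * t powr (a - 1)) + (1 - 1 / a) * t * prob B"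
    by (rule integral_indicator_le_young[OF X moment(1) a \<open>0 < t\<close> B(1)])
  also have "\<dots> \<le> m powr a / (a * t powr (a - 1)) + (1 - 1 / a) * t * \<eta>"
    using moment(2) B(2) a \<open>0 < t\<close> by (intro add_mono divide_right_mono mult_left_mono) auto
  also have "\<dots> = \<eta> powr (1 - 1 / a) * m"
    unfolding t_def using \<open>0 < \<eta>\<close> \<open>0 < m\<close> a by (rule powr_young_optimum)
  finally show "(\<integral>x. indicator B x * X x \<partial>M) \<le> \<eta> powr (1 - 1 / a) * m" .
qed

lemma (in prob_space) second_moment_le:
  fixes X :: "'a \<Rightarrow> real"
  assumes X: "X \<in> borel_measurable M" "\<And>x. 0 \<le> X x"
    and moment: "integrable M (\<lambda>x. X x powr q)" "(\<integral>x. X x powr q \<partial>M) \<le> m powr q"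
    and "2 \<le> q" "0 < m"
  shows "integrable M (\<lambda>x. (X x)\<^sup>2)" and "(\<integral>x. (X x)\<^sup>2 \<partial>M) \<le> m\<^sup>2"
proof -
  have sq_powr: "(y\<^sup>2) powr (q / 2) = y powr q" if "0 \<le> y" for y :: real
  proof -
    have "y\<^sup>2 = y powr 2"
      using that by simp
    then show ?thesis
      by (simp add: powr_powr)
  qed
  have X2: "(\<lambda>x. (X x)\<^sup>2) \<in> borel_measurable M" "\<And>x. 0 \<le> (X x)\<^sup>2"
    using X by simp_all
  have moment2: "integrable M (\<lambda>x. ((X x)\<^sup>2) powr (q / 2))"
    "(\<integral>x. ((X x)\<^sup>2) powr (q / 2) \<partial>M) \<le> (m\<^sup>2) powr (q / 2)"
    using moment X(2) \<open>0 < m\<close> by (simp_all add: sq_powr)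
  have "1 \<le> q / 2" "0 < m\<^sup>2" "prob (space M) \<le> 1" "(0::real) < 1"
    using \<open>2 \<le> q\<close> \<open>0 < m\<close> by simp_all
  note bound = integral_indicator_le_moment[OF X2 moment2 this(1,2) sets.top this(3,4)]
  have "integrable M (\<lambda>x. indicator (space M) x * (X x)\<^sup>2) = integrable M (\<lambda>x. (X x)\<^sup>2)"
    "(\<integral>x. indicator (space M) x * (X x)\<^sup>2 \<partial>M) = (\<integral>x. (X x)\<^sup>2 \<partial>M)"
    by (auto intro!: Bochner_Integration.integrable_cong Bochner_Integration.integral_cong)
  note indicator_space = this
  show "integrable M (\<lambda>x. (X x)\<^sup>2)"
    using bound(1) indicator_space(1) by simp
  show "(\<integral>x. (X x)\<^sup>2 \<partial>M) \<le> m\<^sup>2"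
    using bound(2) indicator_space(2) by simp
qed

lemma nn_integral_sq_norm_clip_step_le_integral:
  fixes N :: "'a::euclidean_space measure" and G d :: 'a and \<tau> :: real
  defines "E \<equiv> {e. norm (G + e) \<le> \<tau>}" and "E' \<equiv> {e. \<tau> < norm (G + e)}"
  assumes "prob_space N" and sets_N: "sets N = sets borel"
    and mean: "integrable N (\<lambda>e. e)" "(\<integral>e. e \<partial>N) = 0"
    and tail: "integrable N (\<lambda>e. indicator E' e * norm e)"
    and second: "integrable N (\<lambda>e. (norm e)\<^sup>2)"
    and "0 \<le> \<tau>" "0 < \<beta>" "0 \<le> d \<bullet> G"
  shows "(\<integral>\<^sup>+e. ennreal ((norm (d - (min 1 (\<tau> / norm (G + e)) * \<beta>) *\<^sub>R (G + e)))\<^sup>2) \<partial>N)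
    \<le> ennreal ((norm d)\<^sup>2 + 2 * \<beta>\<^sup>2 * (norm G)\<^sup>2 - 2 * \<beta> * (d \<bullet> G) * measure N E
        + 2 * \<beta> * norm d * (\<integral>e. indicator E' e * norm e \<partial>N) + 2 * \<beta>\<^sup>2 * (\<integral>e. (norm e)\<^sup>2 \<partial>N))"
proof -
  interpret prob_space N by fact
  have "E \<in> events"
    unfolding E_def sets_N by (auto intro: borel_closed)
  define W where "W e = (norm d)\<^sup>2 + 2 * \<beta>\<^sup>2 * (norm G)\<^sup>2 - 2 * \<beta> * (d \<bullet> G) * indicator E e
      - 2 * \<beta> * (d \<bullet> e) + 2 * \<beta> * norm d * (indicator E' e * norm e) + 2 * \<beta>\<^sup>2 * (norm e)\<^sup>2" for e
  have "integrable N W"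
    unfolding W_def using tail second mean(1) \<open>E \<in> events\<close>
    by (intro Bochner_Integration.integrable_add Bochner_Integration.integrable_diff
        integrable_mult_right integrable_real_indicator integrable_inner_right)
      (auto simp: less_top[symmetric])
  have le_W: "(norm (d - (min 1 (\<tau> / norm (G + e)) * \<beta>) *\<^sub>R (G + e)))\<^sup>2 \<le> W e" for e
    using sq_norm_clip_step_le[OF \<open>0 \<le> \<tau>\<close> \<open>0 < \<beta>\<close> \<open>0 \<le> d \<bullet> G\<close>, of e]
    by (simp add: W_def E_def E'_def algebra_simps)
  have "(\<integral>\<^sup>+e. ennreal ((norm (d - (min 1 (\<tau> / norm (G + e)) * \<beta>) *\<^sub>R (G + e)))\<^sup>2) \<partial>N)
      \<le> (\<integral>\<^sup>+e. ennreal (W e) \<partial>N)"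
    by (intro nn_integral_mono ennreal_leI le_W)
  also have "\<dots> = ennreal (\<integral>e. W e \<partial>N)"
    using \<open>integrable N W\<close>
    by (rule nn_integral_eq_integral) (auto intro: order_trans[OF zero_le_power2 le_W])
  also have "(\<integral>e. W e \<partial>N) = (norm d)\<^sup>2 + 2 * \<beta>\<^sup>2 * (norm G)\<^sup>2 - 2 * \<beta> * (d \<bullet> G) * prob E
      + 2 * \<beta> * norm d * (\<integral>e. indicator E' e * norm e \<partial>N) + 2 * \<beta>\<^sup>2 * (\<integral>e. (norm e)\<^sup>2 \<partial>N)"
    unfolding W_def using tail second mean \<open>E \<in> events\<close>
    by (simp add: Bochner_Integration.integral_diff Bochner_Integration.integral_add
        integrable_inner_right less_top[symmetric] prob_space)
  finally show ?thesis .
qed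

lemma nn_integral_sq_norm_clip_step_le:
  fixes N :: "'a::euclidean_space measure" and G d :: 'a
  assumes "prob_space N" and sets_N: "sets N = sets borel"
    and mean: "integrable N (\<lambda>e. e)" "(\<integral>e. e \<partial>N) = 0"
    and moment: "integrable N (\<lambda>e. norm e powr q)" "(\<integral>e. norm e powr q \<partial>N) \<le> m powr q"
    and "0 < m" "2 \<le> q" "0 < \<eta>" "0 \<le> \<tau>" "0 < \<beta>"
    and coverage: "1 - \<eta> \<le> measure N {e. norm (G + e) \<le> \<tau>}"
    and monotone: "\<mu> * (norm d)\<^sup>2 \<le> d \<bullet> G" "0 \<le> \<mu>" and lipschitz: "norm G \<le> L * norm d"
  shows "(\<integral>\<^sup>+e. ennreal ((norm (d - (min 1 (\<tau> / norm (G + e)) * \<beta>) *\<^sub>R (G + e)))\<^sup>2) \<partial>N)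
    \<le> ennreal ((norm d)\<^sup>2 - 2 * \<beta> * (1 - \<eta>) * \<mu> * (norm d)\<^sup>2
         + 2 * \<beta> * norm d * (\<eta> powr (1 - 1 / q) * m) + 2 * \<beta>\<^sup>2 * (L\<^sup>2 * (norm d)\<^sup>2 + m\<^sup>2))"
proof -
  interpret prob_space N by fact
  define E where "E = {e. norm (G + e) \<le> \<tau>}"
  define E' where "E' = {e. \<tau> < norm (G + e)}"
  have "E \<in> events" "E' \<in> events" "E' = space N - E"
    unfolding E_def E'_def sets_N using sets_eq_imp_space_eq[OF sets_N]
    by (auto intro: borel_closed borel_open)
  then have "prob E' \<le> \<eta>"
    using coverage prob_compl[OF \<open>E \<in> events\<close>] by (simp add: E_def)
  have norm_measurable: "norm \<in> borel_measurable N"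
    using sets_N measurable_cong_sets by (metis borel_measurable_norm)
  note tail = integral_indicator_le_moment[OF norm_measurable norm_ge_zero moment _ \<open>0 < m\<close>
      \<open>E' \<in> events\<close> \<open>prob E' \<le> \<eta>\<close> \<open>0 < \<eta>\<close>]
  note second = second_moment_le[OF norm_measurable norm_ge_zero moment \<open>2 \<le> q\<close> \<open>0 < m\<close>]
  have "0 \<le> d \<bullet> G"
    using monotone by (meson order_trans mult_nonneg_nonneg zero_le_power2)
  have "2 * \<beta> * ((1 - \<eta>) * (\<mu> * (norm d)\<^sup>2)) \<le> 2 * \<beta> * (prob E * (d \<bullet> G))"
    using coverage monotone \<open>0 < \<beta>\<close> by (intro mult_left_mono mult_mono) (auto simp: E_def)
  then have "2 * \<beta> * (1 - \<eta>) * \<mu> * (norm d)\<^sup>2 \<le> 2 * \<beta> * (d \<bullet> G) * prob E"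
    by (simp only: mult_ac)
  moreover have "2 * \<beta> * norm d * (\<integral>e. indicator E' e * norm e \<partial>N)
      \<le> 2 * \<beta> * norm d * (\<eta> powr (1 - 1 / q) * m)"
    using tail(2) \<open>0 < \<beta>\<close> \<open>2 \<le> q\<close> by (intro mult_left_mono) auto
  moreover have "(norm G)\<^sup>2 \<le> L\<^sup>2 * (norm d)\<^sup>2"
    using lipschitz by (metis norm_ge_zero power_mono power_mult_distrib)
  then have "2 * \<beta>\<^sup>2 * ((norm G)\<^sup>2 + (\<integral>e. (norm e)\<^sup>2 \<partial>N)) \<le> 2 * \<beta>\<^sup>2 * (L\<^sup>2 * (norm d)\<^sup>2 + m\<^sup>2)"
    using second(2) by (intro mult_left_mono) auto
  ultimately have "(norm d)\<^sup>2 + 2 * \<beta>\<^sup>2 * (norm G)\<^sup>2 - 2 * \<beta> * (d \<bullet> G) * prob E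
        + 2 * \<beta> * norm d * (\<integral>e. indicator E' e * norm e \<partial>N) + 2 * \<beta>\<^sup>2 * (\<integral>e. (norm e)\<^sup>2 \<partial>N)
      \<le> (norm d)\<^sup>2 - 2 * \<beta> * (1 - \<eta>) * \<mu> * (norm d)\<^sup>2
         + 2 * \<beta> * norm d * (\<eta> powr (1 - 1 / q) * m) + 2 * \<beta>\<^sup>2 * (L\<^sup>2 * (norm d)\<^sup>2 + m\<^sup>2)"
    by (simp add: distrib_left)
  with nn_integral_sq_norm_clip_step_le_integral[OF \<open>prob_space N\<close> sets_N mean tail(1)[unfolded E'_def]
      second(1) \<open>0 \<le> \<tau>\<close> \<open>0 < \<beta>\<close> \<open>0 \<le> d \<bullet> G\<close>] \<open>2 \<le> q\<close>
  show ?thesis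
    unfolding E_def E'_def by (auto elim!: order_trans intro!: ennreal_leI)
qed

lemma drift_mixture_le:
  fixes r \<tau> A B L \<mu> \<eta> \<beta> s :: real
  assumes "0 \<le> r" "0 \<le> \<tau>" "\<tau> \<le> L * r + s * (A * r + B)" "0 \<le> A" "0 \<le> B"
    and "0 < \<eta>" "\<eta> < 1" "0 \<le> L" "0 \<le> s" "\<eta> * s\<^sup>2 \<le> 1" "0 < \<beta>"
  shows "\<eta> * (r + \<beta> * \<tau>)\<^sup>2
      + (1 - \<eta>) * (r\<^sup>2 - 2 * \<beta> * (1 - \<eta>) * \<mu> * r\<^sup>2 + 2 * \<beta> * r * (\<eta> * s * (A * r + B))
                   + 2 * \<beta>\<^sup>2 * (L\<^sup>2 * r\<^sup>2 + (A * r + B)\<^sup>2))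
    \<le> r\<^sup>2 - 2 * \<beta> * ((1 - \<eta>)\<^sup>2 * \<mu> - \<eta> * L - s * A * \<eta> * (2 - \<eta>)) * r\<^sup>2
      + 2 * \<beta> * (\<eta> * s * (2 - \<eta>) * B * r) + \<beta>\<^sup>2 * ((2 * L\<^sup>2 + 8 * A\<^sup>2) * r\<^sup>2 + 8 * B\<^sup>2)"
proof -
  define m where "m = A * r + B"
  have "0 \<le> m"
    using assms by (simp add: m_def)
  have linear: "\<eta> * \<tau> * r \<le> \<eta> * L * r\<^sup>2 + \<eta> * s * m * r"
    using mult_right_mono[OF assms(3) assms(1)] mult_left_mono[of _ _ \<eta>] assms(6)
    by (fastforce simp: m_def power2_eq_square algebra_simps)
  have "\<tau>\<^sup>2 \<le> (L * r + s * m)\<^sup>2"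
    using assms by (intro power_mono) (auto simp: m_def)
  also have "\<dots> \<le> 2 * L\<^sup>2 * r\<^sup>2 + 2 * s\<^sup>2 * m\<^sup>2"
    using zero_le_power2[of "L * r - s * m"] unfolding power2_diff power2_sum power_mult_distrib
    by linarith
  finally have "\<eta> * \<tau>\<^sup>2 \<le> \<eta> * (2 * L\<^sup>2 * r\<^sup>2 + 2 * s\<^sup>2 * m\<^sup>2)"
    using assms(6) by (simp add: mult_left_mono)
  also have "\<dots> = \<eta> * (2 * L\<^sup>2 * r\<^sup>2) + 2 * (\<eta> * s\<^sup>2) * m\<^sup>2"
    by (simp add: algebra_simps)
  also have "\<dots> \<le> \<eta> * (2 * L\<^sup>2 * r\<^sup>2) + 2 * 1 * m\<^sup>2"
    using assms(10) by (intro add_left_mono mult_right_mono mult_left_mono) auto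
  finally have quadratic: "\<eta> * \<tau>\<^sup>2 \<le> \<eta> * (2 * L\<^sup>2 * r\<^sup>2) + 2 * m\<^sup>2"
    by simp
  have "m\<^sup>2 \<le> 2 * A\<^sup>2 * r\<^sup>2 + 2 * B\<^sup>2"
    using zero_le_power2[of "A * r - B"] unfolding m_def power2_diff power2_sum power_mult_distrib
    by linarith
  moreover have "0 \<le> \<eta> * m\<^sup>2"
    using assms(6) by simp
  ultimately have "\<eta> * \<tau>\<^sup>2 + 2 * (1 - \<eta>) * (L\<^sup>2 * r\<^sup>2 + m\<^sup>2) \<le> (2 * L\<^sup>2 + 8 * A\<^sup>2) * r\<^sup>2 + 8 * B\<^sup>2"
    using quadratic assms(7) by (simp add: algebra_simps)
  then have "\<beta>\<^sup>2 * (\<eta> * \<tau>\<^sup>2 + 2 * (1 - \<eta>) * (L\<^sup>2 * r\<^sup>2 + m\<^sup>2))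
      \<le> \<beta>\<^sup>2 * ((2 * L\<^sup>2 + 8 * A\<^sup>2) * r\<^sup>2 + 8 * B\<^sup>2)"
    by (rule mult_left_mono) simp
  moreover have "2 * \<beta> * (\<eta> * \<tau> * r) \<le> 2 * \<beta> * (\<eta> * L * r\<^sup>2 + \<eta> * s * m * r)"
    using linear assms(11) by simp
  ultimately show ?thesis
    unfolding m_def by (simp add: power2_eq_square algebra_simps)
qed

lemma drift_contraction:
  fixes r \<kappa> \<beta> e \<eta> A B L :: real
  assumes "0 < \<kappa>" "0 < \<beta>" "0 \<le> e" "0 < \<eta>" "0 \<le> r" "0 \<le> B"
    and step: "\<beta> * (2 * L\<^sup>2 + 8 * A\<^sup>2) \<le> \<kappa> / 8"
  shows "r\<^sup>2 - 2 * \<beta> * \<kappa> * r\<^sup>2 + 2 * \<beta> * (e * (2 - \<eta>) * B * r)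
      + \<beta>\<^sup>2 * ((2 * L\<^sup>2 + 8 * A\<^sup>2) * r\<^sup>2 + 8 * B\<^sup>2)
    \<le> (1 - \<beta> * \<kappa>) * r\<^sup>2 + \<beta> * (8 * e\<^sup>2 * B\<^sup>2 / \<kappa> + 8 * \<beta> * B\<^sup>2)"
proof -
  have "e * (2 - \<eta>) \<le> 2 * e"
    using assms by (simp add: algebra_simps)
  then have "e * (2 - \<eta>) * B * r \<le> 2 * e * B * r"
    using assms by (intro mult_right_mono) auto
  also have "\<dots> \<le> \<kappa> / 4 * r\<^sup>2 + 4 * e\<^sup>2 * B\<^sup>2 / \<kappa>"
  proof -
    have "0 \<le> \<kappa> / 4 * (r - 4 * e * B / \<kappa>)\<^sup>2"
      using assms by simp
    also have "\<dots> = \<kappa> / 4 * r\<^sup>2 - 2 * e * B * r + 4 * e\<^sup>2 * B\<^sup>2 / \<kappa>"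
      using assms by (simp add: power2_diff field_simps power2_eq_square)
    finally show ?thesis
      by simp
  qed
  finally have "2 * \<beta> * (e * (2 - \<eta>) * B * r) \<le> 2 * \<beta> * (\<kappa> / 4 * r\<^sup>2 + 4 * e\<^sup>2 * B\<^sup>2 / \<kappa>)"
    using assms by (intro mult_left_mono) auto
  moreover have "\<beta> * (\<beta> * (2 * L\<^sup>2 + 8 * A\<^sup>2)) * r\<^sup>2 \<le> \<beta> * (\<kappa> / 8) * r\<^sup>2"
    using step assms by (intro mult_left_mono mult_right_mono) auto
  moreover have "0 \<le> \<beta> * \<kappa> * r\<^sup>2"
    using assms by simp
  ultimately show ?thesis
    by (simp add: power2_eq_square algebra_simps)
qed

lemma step_size_consequences:
  fixes \<beta> \<kappa> \<mu> L A S :: real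
  assumes "0 < \<beta>" "0 < \<kappa>" "\<kappa> \<le> \<mu>" "1 \<le> S"
    and step: "\<beta> < 1 / 4 * (\<kappa> / (\<mu>\<^sup>2 + 6 * L\<^sup>2 + 16 * S * A\<^sup>2))"
  shows "\<beta> * (2 * L\<^sup>2 + 8 * A\<^sup>2) \<le> \<kappa> / 8" and "\<beta> * \<mu> \<le> 1 / 4"
proof -
  define Q where "Q = \<mu>\<^sup>2 + 6 * L\<^sup>2 + 16 * S * A\<^sup>2"
  have "A\<^sup>2 \<le> S * A\<^sup>2"
    using assms(4) by (simp add: mult_le_cancel_right1)
  moreover have "0 \<le> S * A\<^sup>2"
    using assms(4) by simp
  ultimately have "2 * L\<^sup>2 + 8 * A\<^sup>2 \<le> Q / 2" "\<mu>\<^sup>2 \<le> Q"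
    unfolding Q_def by (auto simp: add_increasing)
  moreover have "0 < Q"
    using assms \<open>\<mu>\<^sup>2 \<le> Q\<close> by (smt (verit) zero_less_power2)
  ultimately have "\<beta> * Q < \<kappa> / 4"
    using step by (simp add: Q_def field_simps)
  moreover have "\<beta> * (2 * L\<^sup>2 + 8 * A\<^sup>2) \<le> \<beta> * Q / 2"
    using \<open>2 * L\<^sup>2 + 8 * A\<^sup>2 \<le> Q / 2\<close> assms(1) mult_left_mono[of _ "Q / 2" \<beta>] by simp
  ultimately show "\<beta> * (2 * L\<^sup>2 + 8 * A\<^sup>2) \<le> \<kappa> / 8"
    by linarith
  have "\<beta> * \<mu> * \<mu> \<le> \<beta> * Q"
    using \<open>\<mu>\<^sup>2 \<le> Q\<close> assms(1) by (simp add: power2_eq_square mult.assoc)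
  then have "(\<beta> * \<mu>) * \<mu> < (1 / 4) * \<mu>"
    using \<open>\<beta> * Q < \<kappa> / 4\<close> assms(3) by linarith
  then show "\<beta> * \<mu> \<le> 1 / 4"
    using assms(2,3) by (simp add: mult_less_cancel_right_pos)
qed

lemma drift_bound_ratio_le:
  fixes \<kappa> \<beta> e B :: real
  assumes "0 < \<kappa>" "0 < \<beta>" "\<beta> \<le> e\<^sup>2 / \<kappa>"
  shows "\<beta> * (8 * e\<^sup>2 * B\<^sup>2 / \<kappa> + 8 * \<beta> * B\<^sup>2) / (\<beta> * \<kappa>) \<le> (6 * e * B / \<kappa>)\<^sup>2"
proof -
  define X where "X = e\<^sup>2 * B\<^sup>2 / \<kappa>\<^sup>2"
  have "\<beta> * \<kappa> \<le> e\<^sup>2"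
    using assms by (simp add: pos_le_divide_eq)
  have "0 \<le> X"
    by (simp add: X_def)
  have "\<beta> * (8 * e\<^sup>2 * B\<^sup>2 / \<kappa> + 8 * \<beta> * B\<^sup>2) / (\<beta> * \<kappa>) = 8 * X + 8 * ((\<beta> * \<kappa>) * B\<^sup>2 / \<kappa>\<^sup>2)"
    using assms by (simp add: X_def field_simps power2_eq_square)
  also have "\<dots> \<le> 8 * X + 8 * X"
    unfolding X_def using \<open>\<beta> * \<kappa> \<le> e\<^sup>2\<close> by (intro add_left_mono mult_left_mono divide_right_mono mult_right_mono) auto
  also have "\<dots> \<le> 36 * X"
    using \<open>0 \<le> X\<close> by simp
  also have "\<dots> = (6 * e * B / \<kappa>)\<^sup>2"
    by (simp add: X_def power_divide power_mult_distrib)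
  finally show ?thesis .
qed

definition qcsgd_transfer ::
  "real \<Rightarrow> real \<Rightarrow> real \<Rightarrow> ('a::euclidean_space \<Rightarrow> 'a measure) \<Rightarrow> ('a \<Rightarrow> 'a measure)
     \<Rightarrow> ('a \<Rightarrow> ennreal) \<Rightarrow> 'a \<Rightarrow> ennreal" where
  "qcsgd_transfer \<eta> \<beta> p C D f \<theta> =
     ennreal \<eta> * (\<integral>\<^sup>+g. f (qcsgd_step \<beta> (quantile_norm (D \<theta>) p) \<theta> g) \<partial>C \<theta>)
   + ennreal (1 - \<eta>) * (\<integral>\<^sup>+g. f (qcsgd_step \<beta> (quantile_norm (D \<theta>) p) \<theta> g) \<partial>D \<theta>)"

lemma qcsgd_invariant_nn_integral_le:
  assumes "qcsgd_invariant \<eta> \<beta> p C D \<pi>"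
    and sets_C: "\<And>\<theta>. sets (C \<theta>) = sets borel" and sets_D: "\<And>\<theta>. sets (D \<theta>) = sets borel"
    and f: "f \<in> borel_measurable borel"
  shows "integral\<^sup>N \<pi> f \<le> (\<integral>\<^sup>+\<theta>. qcsgd_transfer \<eta> \<beta> p C D f \<theta> \<partial>\<pi>)"
proof -
  define step where "step \<theta> = qcsgd_step \<beta> (quantile_norm (D \<theta>) p) \<theta>" for \<theta>
  have "step \<theta> \<in> borel_measurable borel" for \<theta>
    unfolding step_def qcsgd_step_def by measurable
  then have step_C: "step \<theta> \<in> measurable (C \<theta>) borel" and step_D: "step \<theta> \<in> measurable (D \<theta>) borel" for \<theta>
    using measurable_cong_sets[OF sets_C refl] measurable_cong_sets[OF sets_D refl] by blast+
  define R where "R \<theta> = distr (C \<theta>) borel (step \<theta>)" for \<theta>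
  define S where "S \<theta> = distr (D \<theta>) borel (step \<theta>)" for \<theta>
  have "emeasure \<pi> A = (\<integral>\<^sup>+\<theta>. ennreal \<eta> * emeasure (R \<theta>) A + ennreal (1 - \<eta>) * emeasure (S \<theta>) A \<partial>\<pi>)"
    if "A \<in> sets borel" for A
    using assms(1) that step_C step_D
    by (simp add: qcsgd_invariant_def qcsgd_kernel_def R_def S_def emeasure_distr step_def
        vimage_def Int_def conj_commute)
  with assms(1) have "integral\<^sup>N \<pi> f
      \<le> (\<integral>\<^sup>+\<theta>. ennreal \<eta> * integral\<^sup>N (R \<theta>) f + ennreal (1 - \<eta>) * integral\<^sup>N (S \<theta>) f \<partial>\<pi>)"
    by (intro invariant_mixture_nn_integral_le[where X=borel]) (auto simp: qcsgd_invariant_def R_def S_def)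
  also have "\<dots> = (\<integral>\<^sup>+\<theta>. qcsgd_transfer \<eta> \<beta> p C D f \<theta> \<partial>\<pi>)"
    using step_C step_D f by (simp add: R_def S_def nn_integral_distr qcsgd_transfer_def step_def)
  finally show ?thesis .
qed

lemma qcsgd_transfer_mono:
  "(\<And>x. f x \<le> g x) \<Longrightarrow> qcsgd_transfer \<eta> \<beta> p C D f \<theta> \<le> qcsgd_transfer \<eta> \<beta> p C D g \<theta>"
  unfolding qcsgd_transfer_def by (intro add_mono mult_left_mono nn_integral_mono) auto

lemma qcsgd_transfer_const:
  assumes "prob_space (C \<theta>)" "prob_space (D \<theta>)" "0 \<le> \<eta>" "\<eta> \<le> 1"
  shows "qcsgd_transfer \<eta> \<beta> p C D (\<lambda>_. a) \<theta> = a"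
proof -
  have "ennreal \<eta> + ennreal (1 - \<eta>) = 1"
    using assms(3,4) by (simp flip: ennreal_plus)
  then show ?thesis
    using assms(1,2) by (simp add: qcsgd_transfer_def prob_space.emeasure_space_1 flip: distrib_right)
qed

lemma nn_integral_sq_dist_qcsgd_step_le:
  assumes "prob_space M" "0 \<le> \<tau>" "0 \<le> \<beta>"
  shows "(\<integral>\<^sup>+g. ennreal ((norm (qcsgd_step \<beta> \<tau> \<theta> g - \<theta>'))\<^sup>2) \<partial>M)
    \<le> ennreal ((norm (\<theta> - \<theta>') + \<beta> * \<tau>)\<^sup>2)"
proof -
  have "(\<integral>\<^sup>+g. ennreal ((norm (qcsgd_step \<beta> \<tau> \<theta> g - \<theta>'))\<^sup>2) \<partial>M)
      \<le> (\<integral>\<^sup>+g. ennreal ((norm (\<theta> - \<theta>') + \<beta> * \<tau>)\<^sup>2) \<partial>M)"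
    using dist_qcsgd_step_le[OF assms(2,3)] by (intro nn_integral_mono ennreal_leI power_mono) auto
  also have "\<dots> = ennreal ((norm (\<theta> - \<theta>') + \<beta> * \<tau>)\<^sup>2)"
    using prob_space.emeasure_space_1[OF assms(1)] by simp
  finally show ?thesis .
qed

locale qcsgd_model = smooth_strongly_convex Lf grad L \<mu>
  for Lf :: "'a::euclidean_space \<Rightarrow> real" and grad L \<mu> +
  fixes \<theta>star :: 'a and \<eta> q A B :: real and C noise D :: "'a \<Rightarrow> 'a measure"
  assumes minimizer: "\<And>\<theta>. Lf \<theta>star \<le> Lf \<theta>"
    and eta: "0 < \<eta>" "\<eta> < 1"
    and C: "\<And>\<theta>. prob_space (C \<theta>)" "\<And>\<theta>. sets (C \<theta>) = sets borel"
    and noise: "\<And>\<theta>. prob_space (noise \<theta>)" "\<And>\<theta>. sets (noise \<theta>) = sets borel"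
    and D_eq: "\<And>\<theta>. D \<theta> = distr (noise \<theta>) borel (\<lambda>e. grad \<theta> + e)"
    and noise_mean: "\<And>\<theta>. integrable (noise \<theta>) (\<lambda>e. e) \<and> (\<integral>e. e \<partial>noise \<theta>) = 0"
    and q: "2 \<le> q" and A: "0 < A" and B: "0 < B"
    and noise_moment: "\<And>\<theta>. integrable (noise \<theta>) (\<lambda>e. norm e powr q) \<and>
          (\<integral>e. norm e powr q \<partial>noise \<theta>) powr (1 / q) \<le> A * norm (\<theta> - \<theta>star) + B"
begin

definition kappa :: real where
  "kappa = (1 - \<eta>)\<^sup>2 * \<mu> - \<eta> * L - \<eta> powr (- 1 / q) * A * (1 - (1 - \<eta>)\<^sup>2)"

definition threshold :: "'a \<Rightarrow> real" where
  "threshold \<theta> = quantile_norm (D \<theta>) (1 - \<eta>)"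

lemma kappa_le_mu: "kappa \<le> \<mu>"
proof -
  have "0 \<le> \<eta> powr (- 1 / q) * A * (1 - (1 - \<eta>)\<^sup>2)" "0 \<le> \<eta> * L" "(1 - \<eta>)\<^sup>2 * \<mu> \<le> 1 * \<mu>"
    using eta A mu_pos L_pos by (auto intro!: mult_right_mono simp: power_le_one abs_square_le_1)
  then show ?thesis
    unfolding kappa_def by linarith
qed

lemma measurable_shift_noise: "(\<lambda>e. grad \<theta> + e) \<in> measurable (noise \<theta>) borel"
  by (subst measurable_cong_sets[OF noise(2) refl]) simp

lemma prob_space_D: "prob_space (D \<theta>)" and sets_D: "sets (D \<theta>) = sets borel"
  unfolding D_eq using noise(1) measurable_shift_noise by (auto intro: prob_space.prob_space_distr)

lemma measure_D_norm_le:
  "measure (D \<theta>) {x \<in> space (D \<theta>). norm x \<le> t} = measure (noise \<theta>) {e. norm (grad \<theta> + e) \<le> t}"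
  unfolding D_eq using sets_eq_imp_space_eq[OF noise(2)] measurable_shift_noise
  by (subst measure_distr) (auto intro!: arg_cong[where f="measure (noise \<theta>)"])

lemma nn_integral_D_eq:
  "f \<in> borel_measurable borel \<Longrightarrow> (\<integral>\<^sup>+g. f g \<partial>D \<theta>) = (\<integral>\<^sup>+e. f (grad \<theta> + e) \<partial>noise \<theta>)"
  by (simp add: D_eq nn_integral_distr measurable_shift_noise)

lemma noise_moment_le: "(\<integral>e. norm e powr q \<partial>noise \<theta>) \<le> (A * norm (\<theta> - \<theta>star) + B) powr q"
proof -
  define X where "X = (\<integral>e. norm e powr q \<partial>noise \<theta>)"
  have "0 \<le> X"
    unfolding X_def by (intro integral_nonneg_AE) auto
  moreover have "X powr (1 / q) \<le> A * norm (\<theta> - \<theta>star) + B"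
    using noise_moment[of \<theta>] by (simp add: X_def)
  then have "(X powr (1 / q)) powr q \<le> (A * norm (\<theta> - \<theta>star) + B) powr q"
    using q by (intro powr_mono2) auto
  ultimately show ?thesis
    using q by (simp add: X_def powr_powr)
qed

lemma threshold_bounds:
  fixes \<theta> :: 'a
  defines "r \<equiv> norm (\<theta> - \<theta>star)"
  shows "0 \<le> threshold \<theta>" and "threshold \<theta> \<le> L * r + \<eta> powr (- 1 / q) * (A * r + B)"
    and "1 - \<eta> \<le> measure (noise \<theta>) {e. norm (grad \<theta> + e) \<le> threshold \<theta>}"
proof -
  interpret N: prob_space "noise \<theta>"
    by (rule noise)
  define m where "m = A * r + B"
  have "0 < m"
    using A B by (simp add: m_def r_def add_nonneg_pos)
  have "norm \<in> borel_measurable (noise \<theta>)"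
    by (subst measurable_cong_sets[OF noise(2) refl]) simp
  then have "1 - \<eta> \<le> N.prob {e \<in> space (noise \<theta>). norm e \<le> \<eta> powr (- 1 / q) * m}"
    using noise_moment[of \<theta>] noise_moment_le[of \<theta>] \<open>0 < m\<close> q eta(1)
    by (intro N.Markov_inequality_powr) (auto simp: m_def r_def)
  also have "\<dots> \<le> N.prob {e. norm (grad \<theta> + e) \<le> norm (grad \<theta>) + \<eta> powr (- 1 / q) * m}"
  proof (rule N.finite_measure_mono)
    show "{e \<in> space (noise \<theta>). norm e \<le> \<eta> powr (- 1 / q) * m}
        \<subseteq> {e. norm (grad \<theta> + e) \<le> norm (grad \<theta>) + \<eta> powr (- 1 / q) * m}"
      using norm_triangle_ineq[of "grad \<theta>"] by (smt (verit) mem_Collect_eq subsetI)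
  qed (simp add: noise(2))
  finally have "1 - \<eta> \<le> measure (D \<theta>) {x \<in> space (D \<theta>). norm x \<le> norm (grad \<theta>) + \<eta> powr (- 1 / q) * m}"
    by (simp add: measure_D_norm_le)
  note quantile = quantile_norm_bounds[OF prob_space_D sets_D _ this, folded threshold_def]
  show "0 \<le> threshold \<theta>"
    using quantile(1) eta by simp
  show "threshold \<theta> \<le> L * r + \<eta> powr (- 1 / q) * (A * r + B)"
    using quantile(2) eta norm_grad_le[OF minimizer, of \<theta>] by (simp add: m_def r_def)
  show "1 - \<eta> \<le> measure (noise \<theta>) {e. norm (grad \<theta> + e) \<le> threshold \<theta>}"
    using quantile(3) eta by (simp add: measure_D_norm_le)
qed

lemma nn_integral_sq_dist_uncorrupted_le:
  fixes \<theta> :: 'a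
  assumes "0 < \<beta>"
  defines "r \<equiv> norm (\<theta> - \<theta>star)" and "m \<equiv> A * norm (\<theta> - \<theta>star) + B"
  shows "(\<integral>\<^sup>+g. ennreal ((norm (qcsgd_step \<beta> (threshold \<theta>) \<theta> g - \<theta>star))\<^sup>2) \<partial>D \<theta>)
    \<le> ennreal (r\<^sup>2 - 2 * \<beta> * (1 - \<eta>) * \<mu> * r\<^sup>2 + 2 * \<beta> * r * (\<eta> powr (1 - 1 / q) * m)
               + 2 * \<beta>\<^sup>2 * (L\<^sup>2 * r\<^sup>2 + m\<^sup>2))"
proof -
  have "(\<integral>\<^sup>+g. ennreal ((norm (qcsgd_step \<beta> (threshold \<theta>) \<theta> g - \<theta>star))\<^sup>2) \<partial>D \<theta>)
      = (\<integral>\<^sup>+e. ennreal ((norm (qcsgd_step \<beta> (threshold \<theta>) \<theta> (grad \<theta> + e) - \<theta>star))\<^sup>2) \<partial>noise \<theta>)"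
    by (rule nn_integral_D_eq) (unfold qcsgd_step_def, measurable)
  also have "\<dots> = (\<integral>\<^sup>+e. ennreal ((norm ((\<theta> - \<theta>star) - (min 1 (threshold \<theta> / norm (grad \<theta> + e)) * \<beta>)
            *\<^sub>R (grad \<theta> + e)))\<^sup>2) \<partial>noise \<theta>)"
    by (simp add: qcsgd_step_def algebra_simps)
  also have "\<dots> \<le> ennreal (r\<^sup>2 - 2 * \<beta> * (1 - \<eta>) * \<mu> * r\<^sup>2 + 2 * \<beta> * r * (\<eta> powr (1 - 1 / q) * m)
               + 2 * \<beta>\<^sup>2 * (L\<^sup>2 * r\<^sup>2 + m\<^sup>2))"
    unfolding r_def m_def
    using noise noise_mean noise_moment noise_moment_le A B q eta assms(1) threshold_bounds(1,3)
      inner_grad_ge[OF minimizer, of \<theta>] mu_pos norm_grad_le[OF minimizer, of \<theta>]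
    by (intro nn_integral_sq_norm_clip_step_le) (auto simp: inner_commute add_nonneg_pos)
  finally show ?thesis .
qed

lemma eta_powr_one_minus: "\<eta> powr (1 - 1 / q) = \<eta> * \<eta> powr (- 1 / q)"
  using eta by (simp add: powr_diff powr_minus_divide divide_inverse)

lemma eta_mult_powr_sq_le_1: "\<eta> * (\<eta> powr (- 1 / q))\<^sup>2 \<le> 1"
proof -
  have "\<eta> * (\<eta> powr (- 1 / q))\<^sup>2 = \<eta> powr (1 - 2 / q)"
    using eta by (simp add: powr_power powr_mult_base)
  also have "\<dots> \<le> 1"
    using eta q by (intro powr_le1) auto
  finally show ?thesis .
qed

lemma qcsgd_transfer_sq_dist_le_mixture:
  fixes \<theta> :: 'a
  assumes "0 < \<beta>" "\<beta> * \<mu> \<le> 1 / 4"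
  defines "r \<equiv> norm (\<theta> - \<theta>star)" and "m \<equiv> A * norm (\<theta> - \<theta>star) + B"
  shows "qcsgd_transfer \<eta> \<beta> (1 - \<eta>) C D (\<lambda>x. ennreal ((norm (x - \<theta>star))\<^sup>2)) \<theta>
    \<le> ennreal (\<eta> * (r + \<beta> * threshold \<theta>)\<^sup>2
        + (1 - \<eta>) * (r\<^sup>2 - 2 * \<beta> * (1 - \<eta>) * \<mu> * r\<^sup>2 + 2 * \<beta> * r * (\<eta> powr (1 - 1 / q) * m)
                     + 2 * \<beta>\<^sup>2 * (L\<^sup>2 * r\<^sup>2 + m\<^sup>2)))"
    (is "_ \<le> ennreal (\<eta> * ?corrupted + (1 - \<eta>) * ?uncorrupted)")
proof -
  have "(1 - \<eta>) * (\<beta> * \<mu>) \<le> 1 * (\<beta> * \<mu>)"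
    using assms(1) eta mu_pos by (intro mult_right_mono) auto
  then have "2 * ((1 - \<eta>) * (\<beta> * \<mu>)) \<le> 1"
    using assms(2) by linarith
  then have "2 * \<beta> * (1 - \<eta>) * \<mu> * r\<^sup>2 \<le> 1 * r\<^sup>2"
    by (intro mult_right_mono) (simp_all only: mult_ac zero_le_power2)
  then have "0 \<le> ?uncorrupted"
    using assms(1) eta A B by (simp add: m_def r_def)
  have "qcsgd_transfer \<eta> \<beta> (1 - \<eta>) C D (\<lambda>x. ennreal ((norm (x - \<theta>star))\<^sup>2)) \<theta>
      \<le> ennreal \<eta> * ennreal ?corrupted + ennreal (1 - \<eta>) * ennreal ?uncorrupted"
    unfolding qcsgd_transfer_def threshold_def[symmetric]
    using nn_integral_sq_dist_qcsgd_step_le[OF C(1) threshold_bounds(1)] assms(1)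
      nn_integral_sq_dist_uncorrupted_le[OF assms(1)]
    by (intro add_mono mult_left_mono) (auto simp: r_def m_def)
  also have "\<dots> = ennreal (\<eta> * ?corrupted + (1 - \<eta>) * ?uncorrupted)"
    using eta \<open>0 \<le> ?uncorrupted\<close> by (simp add: ennreal_mult ennreal_plus)
  finally show ?thesis .
qed

lemma qcsgd_transfer_sq_dist_le:
  assumes "0 < \<beta>" "0 < kappa" "\<beta> * (2 * L\<^sup>2 + 8 * A\<^sup>2) \<le> kappa / 8" "\<beta> * \<mu> \<le> 1 / 4"
  defines "V \<equiv> \<lambda>x. (norm (x - \<theta>star))\<^sup>2"
  shows "qcsgd_transfer \<eta> \<beta> (1 - \<eta>) C D (\<lambda>x. ennreal (V x)) \<theta>
    \<le> ennreal ((1 - \<beta> * kappa) * V \<theta> + \<beta> * (8 * (\<eta> powr (1 - 1 / q))\<^sup>2 * B\<^sup>2 / kappa + 8 * \<beta> * B\<^sup>2))"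
proof -
  define r where "r = norm (\<theta> - \<theta>star)"
  define s where "s = \<eta> powr (- 1 / q)"
  have "(1 - \<eta>)\<^sup>2 * \<mu> - \<eta> * L - s * A * \<eta> * (2 - \<eta>) = kappa"
    by (simp add: kappa_def s_def power2_eq_square algebra_simps)
  then have "\<eta> * (r + \<beta> * threshold \<theta>)\<^sup>2
        + (1 - \<eta>) * (r\<^sup>2 - 2 * \<beta> * (1 - \<eta>) * \<mu> * r\<^sup>2 + 2 * \<beta> * r * (\<eta> * s * (A * r + B))
                     + 2 * \<beta>\<^sup>2 * (L\<^sup>2 * r\<^sup>2 + (A * r + B)\<^sup>2))
      \<le> r\<^sup>2 - 2 * \<beta> * kappa * r\<^sup>2 + 2 * \<beta> * (\<eta> * s * (2 - \<eta>) * B * r)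
        + \<beta>\<^sup>2 * ((2 * L\<^sup>2 + 8 * A\<^sup>2) * r\<^sup>2 + 8 * B\<^sup>2)"
    using threshold_bounds(1,2)[of \<theta>] A B eta L_pos eta_mult_powr_sq_le_1 assms(1)
      drift_mixture_le[of r "threshold \<theta>" L s A B \<eta> \<beta> \<mu>] by (simp add: r_def s_def)
  also have "\<dots> \<le> (1 - \<beta> * kappa) * r\<^sup>2 + \<beta> * (8 * (\<eta> * s)\<^sup>2 * B\<^sup>2 / kappa + 8 * \<beta> * B\<^sup>2)"
    using assms(1,2,3) eta B by (intro drift_contraction) (auto simp: r_def s_def)
  finally have real_bound: "\<eta> * (r + \<beta> * threshold \<theta>)\<^sup>2
        + (1 - \<eta>) * (r\<^sup>2 - 2 * \<beta> * (1 - \<eta>) * \<mu> * r\<^sup>2 + 2 * \<beta> * r * (\<eta> * s * (A * r + B))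
                     + 2 * \<beta>\<^sup>2 * (L\<^sup>2 * r\<^sup>2 + (A * r + B)\<^sup>2))
      \<le> (1 - \<beta> * kappa) * r\<^sup>2 + \<beta> * (8 * (\<eta> * s)\<^sup>2 * B\<^sup>2 / kappa + 8 * \<beta> * B\<^sup>2)" .
  show ?thesis
    unfolding V_def
    by (rule order_trans[OF qcsgd_transfer_sq_dist_le_mixture[OF assms(1,4)] ennreal_leI])
      (use real_bound in \<open>simp only: r_def s_def eta_powr_one_minus\<close>)
qed

lemma invariant_sq_dist_le_drift:
  assumes "qcsgd_invariant \<eta> \<beta> (1 - \<eta>) C D \<pi>"
    and "0 < \<beta>" "0 < kappa" "\<beta> * (2 * L\<^sup>2 + 8 * A\<^sup>2) \<le> kappa / 8" "\<beta> * \<mu> \<le> 1 / 4"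
  defines "b \<equiv> 8 * (\<eta> powr (1 - 1 / q))\<^sup>2 * B\<^sup>2 / kappa + 8 * \<beta> * B\<^sup>2"
  shows "(\<integral>\<^sup>+\<theta>. ennreal ((norm (\<theta> - \<theta>star))\<^sup>2) \<partial>\<pi>) \<le> ennreal (\<beta> * b / (\<beta> * kappa))"
proof -
  interpret lyapunov_drift \<pi> borel "qcsgd_transfer \<eta> \<beta> (1 - \<eta>) C D" "\<lambda>x. (norm (x - \<theta>star))\<^sup>2"
    "\<beta> * kappa" "\<beta> * b"
  proof (rule lyapunov_drift.intro)
    show "prob_space \<pi>" "sets \<pi> = sets borel"
      using assms(1) by (simp_all add: qcsgd_invariant_def)
    show "integral\<^sup>N \<pi> f \<le> (\<integral>\<^sup>+\<theta>. qcsgd_transfer \<eta> \<beta> (1 - \<eta>) C D f \<theta> \<partial>\<pi>)"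
      if "f \<in> borel_measurable borel" for f
      using assms(1) C(2) sets_D that by (rule qcsgd_invariant_nn_integral_le)
    show "qcsgd_transfer \<eta> \<beta> (1 - \<eta>) C D f \<theta> \<le> qcsgd_transfer \<eta> \<beta> (1 - \<eta>) C D g \<theta>"
      if "\<And>x. f x \<le> g x" for f g \<theta>
      using that by (rule qcsgd_transfer_mono)
    show "qcsgd_transfer \<eta> \<beta> (1 - \<eta>) C D (\<lambda>_. a) \<theta> \<le> a" for a \<theta>
      using C(1) prob_space_D eta by (simp add: qcsgd_transfer_const)
    show "qcsgd_transfer \<eta> \<beta> (1 - \<eta>) C D (\<lambda>x. ennreal ((norm (x - \<theta>star))\<^sup>2)) \<theta>
        \<le> ennreal ((1 - \<beta> * kappa) * (norm (\<theta> - \<theta>star))\<^sup>2 + \<beta> * b)" for \<theta>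
      using qcsgd_transfer_sq_dist_le[OF assms(2-5)] by (simp add: b_def)
    have "\<beta> * kappa \<le> \<beta> * \<mu>"
      using kappa_le_mu assms(2) by simp
    then show "\<beta> * kappa \<le> 1"
      using assms(5) by linarith
    show "0 \<le> \<beta> * b"
      using assms(2,3) by (simp add: b_def)
  qed (use assms(2,3) in auto)
  show ?thesis
    by (rule nn_integral_V_le)
qed

lemma invariant_sq_dist_bound:
  assumes "qcsgd_invariant \<eta> \<beta> (1 - \<eta>) C D \<pi>" and "0 < \<beta>" "0 < kappa"
    and "\<beta> < 1 / 4 * (kappa / (\<mu>\<^sup>2 + 6 * L\<^sup>2 + 16 * \<eta> powr (- 2 / q) * A\<^sup>2))"
    and "\<beta> \<le> \<eta> powr (2 - 2 / q) / kappa"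
  shows "(\<integral>\<^sup>+\<theta>. ennreal ((norm (\<theta> - \<theta>star))\<^sup>2) \<partial>\<pi>) \<le> ennreal ((6 * \<eta> powr (1 - 1 / q) * B / kappa)\<^sup>2)"
proof -
  have "\<eta> powr 0 \<le> \<eta> powr (- 2 / q)"
    using eta q by (intro powr_mono') auto
  then have "1 \<le> \<eta> powr (- 2 / q)"
    using eta by simp
  note step_size = step_size_consequences[OF assms(2,3) kappa_le_mu this assms(4)]
  have "(\<eta> powr (1 - 1 / q))\<^sup>2 = \<eta> powr (2 - 2 / q)"
    using eta by (simp add: powr_power algebra_simps)
  then have "\<beta> \<le> (\<eta> powr (1 - 1 / q))\<^sup>2 / kappa"
    using assms(5) by simp
  have "(\<integral>\<^sup>+\<theta>. ennreal ((norm (\<theta> - \<theta>star))\<^sup>2) \<partial>\<pi>)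
      \<le> ennreal (\<beta> * (8 * (\<eta> powr (1 - 1 / q))\<^sup>2 * B\<^sup>2 / kappa + 8 * \<beta> * B\<^sup>2) / (\<beta> * kappa))"
    by (rule invariant_sq_dist_le_drift[OF assms(1-3) step_size])
  also have "\<dots> \<le> ennreal ((6 * \<eta> powr (1 - 1 / q) * B / kappa)\<^sup>2)"
    by (intro ennreal_leI drift_bound_ratio_le assms(2,3)) fact
  finally show ?thesis .
qed

end

theorem proposition1:
  fixes Lf :: "'a::euclidean_space \<Rightarrow> real"
    and grad :: "'a \<Rightarrow> 'a"
    and \<theta>star :: 'a
    and L \<mu> \<eta> \<delta> q Aq Bq \<beta> :: real
    and C :: "'a \<Rightarrow> 'a measure"
    and D :: "'a \<Rightarrow> 'a measure"
    and noise :: "'a \<Rightarrow> 'a measure"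
    and \<nu>1 \<nu>2 :: "'a \<Rightarrow> 'a measure"
    and h :: "'a \<Rightarrow> 'a \<Rightarrow> real"
    and kappaR :: "real \<Rightarrow> real"
    and \<pi> :: "'a measure"
  assumes grad: "\<And>\<theta>. (Lf has_derivative (\<lambda>v. grad \<theta> \<bullet> v)) (at \<theta>)"
    and A1: "\<And>\<theta> \<theta>'. Lf \<theta>' \<le> Lf \<theta> + grad \<theta> \<bullet> (\<theta>' - \<theta>) + L / 2 * (norm (\<theta> - \<theta>'))\<^sup>2"
    and A2: "\<And>\<theta> \<theta>'. Lf \<theta>' \<ge> Lf \<theta> + grad \<theta> \<bullet> (\<theta>' - \<theta>) + \<mu> / 2 * (norm (\<theta> - \<theta>'))\<^sup>2"
    and mu_pos: "\<mu> > 0"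
    and minimizer: "\<And>\<theta>. Lf \<theta>star \<le> Lf \<theta>"
    and unique_min: "\<And>\<theta>. (\<forall>\<theta>'. Lf \<theta> \<le> Lf \<theta>') \<Longrightarrow> \<theta> = \<theta>star"
    and eta: "0 < \<eta>" "\<eta> < 1/2"
    and C_prob: "\<And>\<theta>. prob_space (C \<theta>)" "\<And>\<theta>. sets (C \<theta>) = sets borel"
    and noise_prob: "\<And>\<theta>. prob_space (noise \<theta>)" "\<And>\<theta>. sets (noise \<theta>) = sets borel"
    and D_def: "\<And>\<theta>. D \<theta> = distr (noise \<theta>) borel (\<lambda>e. grad \<theta> + e)"
    and noise_mean: "\<And>\<theta>. integrable (noise \<theta>) (\<lambda>e. e) \<and> (\<integral>e. e \<partial>noise \<theta>) = 0"
    and delta: "0 < \<delta>" "\<delta> \<le> 1"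
    and noise_mix: "\<And>\<theta> A. A \<in> sets borel \<Longrightarrow>
          emeasure (noise \<theta>) A = ennreal \<delta> * emeasure (\<nu>1 \<theta>) A + ennreal (1 - \<delta>) * emeasure (\<nu>2 \<theta>) A"
    and nu1: "\<And>\<theta>. \<nu>1 \<theta> = density lborel (\<lambda>\<omega>. ennreal (h \<theta> \<omega>))"
    and nu1_prob: "\<And>\<theta>. prob_space (\<nu>1 \<theta>)"
    and h_meas: "\<And>\<theta>. h \<theta> \<in> borel_measurable borel"
    and h_nonneg: "\<And>\<theta> \<omega>. 0 \<le> h \<theta> \<omega>"
    and nu2_prob: "\<And>\<theta>. prob_space (\<nu>2 \<theta>)" "\<And>\<theta>. sets (\<nu>2 \<theta>) = sets borel"
    and h_lower: "\<And>R. R > 0 \<Longrightarrow> kappaR R > 0 \<and> (\<forall>\<theta>. (INF \<omega>\<in>cball 0 R. h \<theta> \<omega>) > kappaR R)"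
    and q: "q \<ge> 2"
    and AB: "Aq > 0" "Bq > 0"
    and A5: "\<And>\<theta>. integrable (noise \<theta>) (\<lambda>e. norm e powr q) \<and>
          (\<integral>e. norm e powr q \<partial>noise \<theta>) powr (1 / q) \<le> Aq * norm (\<theta> - \<theta>star) + Bq"
    and kappa_pos: "(1 - \<eta>) * (1 - \<eta>) * \<mu> - \<eta> * L
          - (1 - (1 - \<eta>)) powr (- 1 / q) * Aq * (1 - (1 - \<eta>) * (1 - \<eta>)) > 0"
    and beta_pos: "\<beta> > 0"
    and beta1: "\<beta> < 1/4 * (((1 - \<eta>) * (1 - \<eta>) * \<mu> - \<eta> * L
          - (1 - (1 - \<eta>)) powr (- 1 / q) * Aq * (1 - (1 - \<eta>) * (1 - \<eta>)))
          / (\<mu>\<^sup>2 + 6 * L\<^sup>2 + 16 * \<eta> powr (- 2 / q) * Aq\<^sup>2))"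
    and beta2: "\<beta> \<le> \<eta> powr (2 - 2 / q) / ((1 - \<eta>) * (1 - \<eta>) * \<mu> - \<eta> * L
          - (1 - (1 - \<eta>)) powr (- 1 / q) * Aq * (1 - (1 - \<eta>) * (1 - \<eta>)))"
    and pi_inv: "qcsgd_invariant \<eta> \<beta> (1 - \<eta>) C D \<pi>"
    and pi_unique: "\<And>\<pi>'. qcsgd_invariant \<eta> \<beta> (1 - \<eta>) C D \<pi>' \<Longrightarrow> \<pi>' = \<pi>"
  shows "(\<integral>\<^sup>+ \<theta>. ennreal ((norm (\<theta> - \<theta>star))\<^sup>2) \<partial>\<pi>)
           \<le> ennreal ((6 * \<eta> powr (1 - 1 / q) * Bq
               / ((1 - \<eta>) * (1 - \<eta>) * \<mu> - \<eta> * L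
                  - (1 - (1 - \<eta>)) powr (- 1 / q) * Aq * (1 - (1 - \<eta>) * (1 - \<eta>))))\<^sup>2)"
proof -
  (* The assumptions on delta, nu1, nu2, h and kappaR, the differentiability of Lf, the uniqueness
     of the minimizer and of pi only serve the existence and uniqueness of pi: the bound holds for
     every invariant probability measure. *)
  interpret qcsgd_model Lf grad L \<mu> \<theta>star \<eta> q Aq Bq C noise D
  proof (intro qcsgd_model.intro smooth_strongly_convex.intro qcsgd_model_axioms.intro)
    show "\<eta> < 1"
      using eta by simp
  qed (fact A1 A2 mu_pos minimizer eta(1) C_prob noise_prob D_def noise_mean q AB A5)+
  have "(1 - \<eta>) * (1 - \<eta>) * \<mu> - \<eta> * L
      - (1 - (1 - \<eta>)) powr (- 1 / q) * Aq * (1 - (1 - \<eta>) * (1 - \<eta>)) = kappa"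
    by (simp add: kappa_def power2_eq_square)
  with invariant_sq_dist_bound[OF pi_inv beta_pos] kappa_pos beta1 beta2 show ?thesis
    by simp
qed

end
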